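(* Let $\Omega\subset\mathbb{R}^n$ ($n\ge2$) be a bounded domain and $1\le s<\infty$. Let $\mathcal{T}$ be a family of essential tubes for $\Omega$ such that the corresponding components $\Omega_T$, $T\in\mathcal{T}$, are pairwise disjoint, and let the parameters of $T\in\mathcal{T}$ be $r_T,l_T,c_T$ (so $T=T_{l_T,r_T,c_T}$). If \[ E_{\mathcal{T}}=\sum_{T\in\mathcal{T}} c_T\,(r_T)^n\left(\frac{l_T}{r_T}\right)^{s+1}=\infty, \] then $\Omega$ is not an $L^s$-averaging domain.
   Context: For $k\ge1$, $D_r^k\subset\mathbb{R}^k$ is the closed $k$-dimensional disk of radius $r$ centered at the origin. A tube $T_{l,r}$ is the image under a Euclidean transformation of $[0,l]\times D_r^{n-1}$; its wall is the image of $[0,l]\times\partial D_r^{n-1}$, and for $t\in[0,l]$ the $t$-th slice of a subset of $T$ is its intersection with the image of $\{t\}\times D_r^{n-1}$. An essential tube $T=T_{l,r,c}$ for $\Omega$ is a tube $T_{l,r}$ such that $T\cap\Omega$ has a connected component $\Omega_T$ that does not meet the wall of $T$ and such that, with $c>0$, for every $t\in[0,l]$ the $(n-1)$-dimensional measure of the $t$-th slice of $\Omega_T$ is at least $c$ times the measure of $D_r^{n-1}$. A domain $\Omega$ with $|\Omega|<\infty$ is $L^s$-averaging ($1\le s<\infty$) if there is a constant $C$ such that for all $u\in L^1_{\mathrm{loc}}(\Omega)$, $\left(\frac{1}{|\Omega|}\int_\Omega|u-u_\Omega|^s\,dz\right)^{1/s}\le C\left(\sup_{B\subset\Omega}\frac{1}{|B|}\int_B|u-u_B|^s\,dz\right)^{1/s}$,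 where $B$ ranges over open balls in $\Omega$ and $u_E$ denotes the mean of $u$ over $E$. *)

theory Defs
  imports "HOL-Analysis.Analysis"
begin

text \<open>Ambient space R^n is represented as real \<times> (real^'m), with n = CARD('m) + 1 \<ge> 2.
  The first coordinate is the axial direction of the model tube [0,l] \<times> D_r^{n-1}.\<close>

definition euclid_transf :: "('a::real_inner \<Rightarrow> 'a) \<Rightarrow> bool" where
  "euclid_transf g \<longleftrightarrow> (\<exists>Q b. orthogonal_transformation Q \<and> g = (\<lambda>x. Q x + b))"

definition tube :: "(real \<times> (real^'m) \<Rightarrow> real \<times> (real^'m)) \<Rightarrow> real \<Rightarrow> real \<Rightarrow> (real \<times> (real^'m)) set" where
  "tube g l r = g ` ({0..l} \<times> cball 0 r)"

definition tube_wall :: "(real \<times> (real^'m) \<Rightarrow> real \<times> (real^'m)) \<Rightarrow> real \<Rightarrow> real \<Rightarrow> (real \<times> (real^'m)) set" where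
  "tube_wall g l r = g ` ({0..l} \<times> sphere 0 r)"

text \<open>(n-1)-dimensional measure of the t-th slice of S, computed in the
  isometric coordinates of the tube (the slice is an isometric image of a subset of R^(n-1)).\<close>
definition slice_measure :: "(real \<times> (real^'m) \<Rightarrow> real \<times> (real^'m)) \<Rightarrow> real \<Rightarrow> (real \<times> (real^'m)) set \<Rightarrow> real \<Rightarrow> real" where
  "slice_measure g r S t = measure lebesgue {y \<in> cball 0 r. g (t, y) \<in> S}"

definition essential_tube :: "(real \<times> (real^'m)) set \<Rightarrow> (real \<times> (real^'m) \<Rightarrow> real \<times> (real^'m))
    \<Rightarrow> real \<Rightarrow> real \<Rightarrow> real \<Rightarrow> (real \<times> (real^'m)) set \<Rightarrow> bool" where
  "essential_tube \<Omega> g l r c \<Omega>T \<longleftrightarrow>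
     euclid_transf g \<and> 0 < l \<and> 0 < r \<and> 0 < c \<and>
     \<Omega>T \<in> components (tube g l r \<inter> \<Omega>) \<and>
     \<Omega>T \<inter> tube_wall g l r = {} \<and>
     (\<forall>t\<in>{0..l}. slice_measure g r \<Omega>T t \<ge> c * measure lebesgue (cball (0::real^'m) r))"

definition loc_integrable :: "('a::euclidean_space) set \<Rightarrow> ('a \<Rightarrow> real) \<Rightarrow> bool" where
  "loc_integrable \<Omega> u \<longleftrightarrow> (\<forall>K. compact K \<and> K \<subseteq> \<Omega> \<longrightarrow> set_integrable lebesgue K u)"

definition mean_val :: "('a::euclidean_space) set \<Rightarrow> ('a \<Rightarrow> real) \<Rightarrow> real" where
  "mean_val E u = (LINT z:E|lebesgue. u z) / measure lebesgue E"

definition osc_avg :: "real \<Rightarrow> ('a::euclidean_space) set \<Rightarrow> ('a \<Rightarrow> real) \<Rightarrow> ennreal" where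
  "osc_avg s E u = ennreal (1 / measure lebesgue E) *
      (\<integral>\<^sup>+ z\<in>E. ennreal (\<bar>u z - mean_val E u\<bar> powr s) \<partial>lebesgue)"

definition ennroot :: "real \<Rightarrow> ennreal \<Rightarrow> ennreal" where
  "ennroot s x = (if x = \<infinity> then \<infinity> else ennreal (enn2real x powr (1 / s)))"

definition Ls_averaging :: "real \<Rightarrow> ('a::euclidean_space) set \<Rightarrow> bool" where
  "Ls_averaging s \<Omega> \<longleftrightarrow> emeasure lebesgue \<Omega> < \<infinity> \<and>
     (\<exists>C::real. \<forall>u. loc_integrable \<Omega> u \<longrightarrow>
        ennroot s (osc_avg s \<Omega> u) \<le>
        ennreal C * ennroot s (SUP B\<in>{ball x \<rho> |x \<rho>. 0 < \<rho> \<and> ball x \<rho> \<subseteq> \<Omega>}. osc_avg s B u))"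

end

theory Submission
  imports Defs
begin

text \<open>On each tube T of a finite subfamily put the tent function that rises with slope 1/r(T)
  from both ends of T towards its middle, restricted to the component \<Omega>(T), and add them up.
  A ball in \<Omega> on which this function exceeds 2 is trapped inside one \<Omega>(T) and has radius at
  most r(T), so the function oscillates by at most 2 on every ball. On the other hand, whatever the
  mean over \<Omega> is, on one of two slabs of T (next to an end, or next to the middle) the function
  deviates from it by at least l(T) / (8 r(T)), on a set of measure at least c(T) l(T) |D(r(T))| / 8.
  So T contributes a fixed multiple of c(T) r(T)^n (l(T) / r(T))^(s+1) to the integral of the s-th
  power of the deviation over \<Omega>, and the sum of these contributions is unbounded.\<close>

section \<open>Euclidean motions\<close>

lemma euclid_transf_dist:
  assumes "euclid_transf g"
  shows "dist (g x) (g y) = dist x y"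
proof -
  obtain Q b where Q: "orthogonal_transformation Q" and g: "g = (\<lambda>x. Q x + b)"
    using assms unfolding euclid_transf_def by blast
  have "dist (g x) (g y) = norm (Q (x - y))"
    using orthogonal_transformation_linear[OF Q] by (simp add: g dist_norm linear_diff)
  then show ?thesis
    using Q by (simp add: orthogonal_transformation_norm dist_norm)
qed

lemma euclid_transf_continuous_on:
  assumes "euclid_transf g"
  shows "continuous_on S g"
  unfolding continuous_on_iff using euclid_transf_dist[OF assms] by metis

lemma euclid_transf_bij:
  fixes g :: "'a::euclidean_space \<Rightarrow> 'a"
  assumes "euclid_transf g"
  shows "bij g"
proof -
  obtain Q b where Q: "orthogonal_transformation Q" and g: "g = (\<lambda>x. Q x + b)"
    using assms unfolding euclid_transf_def by blast
  have "g = (\<lambda>x. x + b) \<circ> Q"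
    by (simp add: g o_def)
  then show ?thesis
    using orthogonal_transformation_bij[OF Q] bij_plus_right[of b] by (metis bij_comp)
qed

lemma euclid_transf_inv:
  fixes g :: "'a::euclidean_space \<Rightarrow> 'a"
  assumes "euclid_transf g"
  shows "euclid_transf (inv g)"
proof -
  obtain Q b where Q: "orthogonal_transformation Q" and g: "g = (\<lambda>x. Q x + b)"
    using assms unfolding euclid_transf_def by blast
  have Q': "orthogonal_transformation (inv Q)"
    using Q by (rule orthogonal_transformation_inv)
  have QQ': "Q (inv Q y) = y" "inv Q (Q y) = y" for y
    using orthogonal_transformation_bij[OF Q] by (simp_all add: bij_is_surj bij_is_inj surj_f_inv_f)
  have "inv g = (\<lambda>y. inv Q y + - inv Q b)"
  proof (rule inv_equality)
    show "inv Q (g x) + - inv Q b = x" for x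
      using orthogonal_transformation_linear[OF Q'] by (simp add: g linear_add QQ')
    show "g (inv Q y + - inv Q b) = y" for y
      using orthogonal_transformation_linear[OF Q] by (simp add: g linear_add linear_neg linear_diff QQ')
  qed
  then show ?thesis
    using Q' unfolding euclid_transf_def by blast
qed

lemma euclid_transf_inv_cancel [simp]:
  fixes g :: "'a::euclidean_space \<Rightarrow> 'a"
  assumes "euclid_transf g"
  shows "inv g (g x) = x" "g (inv g y) = y"
  using euclid_transf_bij[OF assms] by (simp_all add: bij_is_inj bij_is_surj surj_f_inv_f)

lemma euclid_transf_image_ball:
  fixes g :: "'a::euclidean_space \<Rightarrow> 'a"
  assumes "euclid_transf g"
  shows "g ` ball x r = ball (g x) r"
proof -
  have "y \<in> g ` ball x r" if "dist (g x) y < r" for y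
    using that euclid_transf_dist[OF assms, of x "inv g y"] assms
    by (intro image_eqI[of _ _ "inv g y"]) auto
  then show ?thesis
    using euclid_transf_dist[OF assms] by auto
qed

lemma open_euclid_transf_image:
  fixes g :: "'a::euclidean_space \<Rightarrow> 'a"
  assumes "euclid_transf g" and "open U"
  shows "open (g ` U)"
proof -
  have "g ` U = inv g -` U"
    using euclid_transf_bij[OF assms(1)] by (simp add: bij_vimage_eq_inv_image bij_imp_bij_inv inv_inv_eq)
  moreover have "continuous_on UNIV (inv g)"
    using euclid_transf_inv[OF assms(1)] by (rule euclid_transf_continuous_on)
  ultimately show ?thesis
    using assms(2) by (simp add: continuous_on_open_vimage[OF open_UNIV])
qed

text \<open>A Euclidean motion maps balls onto balls of the same radius, and a Vitali covering of an
  open set by disjoint balls transfers this to open sets.\<close>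

lemma emeasure_euclid_transf_image_open_le:
  fixes g :: "'a::euclidean_space \<Rightarrow> 'a"
  assumes g: "euclid_transf g" and U: "open U"
  shows "emeasure lebesgue (g ` U) \<le> emeasure lebesgue U"
proof -
  define K where "K = {i::'a \<times> real. 0 < snd i \<and> ball (fst i) (snd i) \<subseteq> U}"
  have cover: "\<exists>i. i \<in> K \<and> x \<in> ball (fst i) (snd i) \<and> snd i < d" if "x \<in> U" "0 < d" for x d
  proof -
    obtain e where "e > 0" "ball x e \<subseteq> U"
      using U \<open>x \<in> U\<close> open_contains_ball by blast
    then show ?thesis
      using \<open>0 < d\<close> by (intro exI[of _ "(x, min e (d/2))"]) (auto simp: K_def)
  qed
  obtain C where C: "countable C" "C \<subseteq> K"
    and disj: "pairwise (\<lambda>i j. disjnt (ball (fst i) (snd i)) (ball (fst j) (snd j))) C"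
    and null: "negligible (U - (\<Union>i\<in>C. ball (fst i) (snd i)))"
    using Vitali_covering_theorem_balls[of U K fst snd, OF cover] by blast
  define N where "N = U - (\<Union>i\<in>C. ball (fst i) (snd i))"
  define B :: "'a \<times> real \<Rightarrow> 'a set" where "B i = ball (fst i) (snd i)" for i
  have null_gN: "g ` N \<in> null_sets lebesgue"
  proof -
    have "negligible (g ` N)"
    proof (rule negligible_locally_Lipschitz_image)
      show "negligible N"
        using null by (simp add: N_def)
      show "\<exists>T B. open T \<and> x \<in> T \<and> (\<forall>y\<in>N \<inter> T. norm (g y - g x) \<le> B * norm (y - x))" for x
        using euclid_transf_dist[OF g] by (intro exI[of _ UNIV] exI[of _ 1]) (simp add: dist_norm)
    qed simp
    then show ?thesis
      by (simp add: negligible_iff_null_sets)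
  qed
  have disj_B: "disjoint_family_on B C"
    using disj by (auto simp: disjoint_family_on_def pairwise_def disjnt_def B_def)
  have disj_gB: "disjoint_family_on (\<lambda>i. g ` B i) C"
    using disj_B euclid_transf_bij[OF g] unfolding disjoint_family_on_def
    by (metis bij_is_inj image_Int image_empty)
  have "open (\<Union>i\<in>C. g ` B i)"
    using open_euclid_transf_image[OF g] by (auto simp: B_def)
  then have open_gB: "(\<Union>i\<in>C. g ` B i) \<in> sets lebesgue"
    by simp
  have "U \<subseteq> (\<Union>i\<in>C. B i) \<union> N"
    by (auto simp: N_def B_def)
  then have "g ` U \<subseteq> (\<Union>i\<in>C. g ` B i) \<union> g ` N"
    by blast
  then have "emeasure lebesgue (g ` U) \<le> emeasure lebesgue ((\<Union>i\<in>C. g ` B i) \<union> g ` N)"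
    using open_gB null_gN by (intro emeasure_mono) auto
  also have "\<dots> = emeasure lebesgue (\<Union>i\<in>C. g ` B i)"
    using open_gB null_gN by (rule emeasure_Un_null_set)
  also have "\<dots> = (\<integral>\<^sup>+i. emeasure lebesgue (g ` B i) \<partial>count_space C)"
    using C(1) disj_gB open_euclid_transf_image[OF g] by (intro emeasure_UN_countable) (auto simp: B_def)
  also have "\<dots> = (\<integral>\<^sup>+i. emeasure lebesgue (B i) \<partial>count_space C)"
    using C(2) by (intro nn_integral_cong)
      (auto simp: K_def B_def euclid_transf_image_ball[OF g] emeasure_ball)
  also have "\<dots> = emeasure lebesgue (\<Union>i\<in>C. B i)"
    by (rule emeasure_UN_countable[symmetric, OF _ C(1) disj_B]) (simp add: B_def)
  also have "\<dots> \<le> emeasure lebesgue U"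
    using C(2) U by (intro emeasure_mono) (auto simp: K_def B_def)
  finally show ?thesis .
qed

lemma emeasure_euclid_transf_image_le:
  fixes g :: "'a::euclidean_space \<Rightarrow> 'a"
  assumes g: "euclid_transf g" and S: "S \<in> sets lebesgue"
  shows "emeasure lebesgue (g ` S) \<le> emeasure lebesgue S"
proof (rule ennreal_le_epsilon)
  fix e :: real
  assume "0 < e"
  then obtain T where T: "open T" "S \<subseteq> T" "T - S \<in> lmeasurable" "emeasure lebesgue (T - S) < e"
    using sets_lebesgue_outer_open[OF S] by blast
  have "emeasure lebesgue (g ` S) \<le> emeasure lebesgue (g ` T)"
    using T(1,2) open_euclid_transf_image[OF g] by (intro emeasure_mono image_mono) auto
  also have "\<dots> \<le> emeasure lebesgue T"
    using g T(1) by (rule emeasure_euclid_transf_image_open_le)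
  also have "\<dots> = emeasure lebesgue (S \<union> (T - S))"
    using T(2) by (simp add: Un_absorb1)
  also have "\<dots> = emeasure lebesgue S + emeasure lebesgue (T - S)"
    using T(3) S by (intro plus_emeasure[symmetric]) auto
  also have "\<dots> \<le> emeasure lebesgue S + e"
    using T(4) by (intro add_left_mono) simp
  finally show "emeasure lebesgue (g ` S) \<le> emeasure lebesgue S + e" .
qed

lemma infsum_ennreal_eq_top_imp_sum_gt:
  assumes "(\<Sum>\<^sub>\<infinity>i\<in>I. ennreal (a i)) = \<infinity>" and "\<And>i. i \<in> I \<Longrightarrow> 0 \<le> a i"
  obtains F where "finite F" "F \<subseteq> I" "K < sum a F"
proof -
  have sup: "(SUP F\<in>{F. finite F \<and> F \<subseteq> I}. \<Sum>i\<in>F. ennreal (a i)) = \<infinity>"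
    using assms(1) by (simp add: nonneg_infsum_complete)
  have "ennreal (max K 0) < (SUP F\<in>{F. finite F \<and> F \<subseteq> I}. \<Sum>i\<in>F. ennreal (a i))"
    unfolding sup by simp
  then obtain F where F: "finite F" "F \<subseteq> I" "ennreal (max K 0) < (\<Sum>i\<in>F. ennreal (a i))"
    unfolding less_SUP_iff by blast
  moreover have "(\<Sum>i\<in>F. ennreal (a i)) = ennreal (sum a F)"
    using F(2) assms(2) by (intro sum_ennreal) auto
  ultimately have "max K 0 < sum a F"
    by (simp add: ennreal_less_iff)
  then show ?thesis
    using that F(1,2) by auto
qed

lemma sum_set_nn_integral_le:
  assumes I: "finite I" "disjoint_family_on A I" and A: "\<And>i. i \<in> I \<Longrightarrow> A i \<in> sets M"
    and sub: "\<And>i. i \<in> I \<Longrightarrow> A i \<subseteq> B" and f: "f \<in> borel_measurable M"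
  shows "(\<Sum>i\<in>I. \<integral>\<^sup>+x\<in>A i. f x \<partial>M) \<le> (\<integral>\<^sup>+x\<in>B. f x \<partial>M)"
proof -
  have "(\<Sum>i\<in>I. \<integral>\<^sup>+x\<in>A i. f x \<partial>M) = (\<integral>\<^sup>+x. f x * (\<Sum>i\<in>I. indicator (A i) x) \<partial>M)"
    using f A by (simp add: nn_integral_sum[symmetric] sum_distrib_left)
  also have "\<dots> = (\<integral>\<^sup>+x\<in>(\<Union>i\<in>I. A i). f x \<partial>M)"
    using I by (simp add: indicator_UN_disjoint)
  also have "\<dots> \<le> (\<integral>\<^sup>+x\<in>B. f x \<partial>M)"
    using sub by (intro nn_integral_mono) (auto split: split_indicator)
  finally show ?thesis .
qed

lemma measure_lebesgue_pos_open:
  assumes "open \<Omega>" "\<Omega> \<noteq> {}" "\<Omega> \<in> lmeasurable"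
  shows "0 < measure lebesgue \<Omega>"
  using open_not_negligible[OF assms(1,2)] negligible_iff_measure0[OF assms(3)]
  by (simp add: zero_less_measure_iff)

section \<open>Mean oscillations\<close>

lemma ennroot_le_ennreal:
  assumes "0 < s" "0 \<le> y" "x \<le> ennreal y"
  shows "ennroot s x \<le> ennreal (y powr (1 / s))"
proof -
  have "x \<noteq> top"
    using neq_top_trans[OF ennreal_neq_top assms(3)] .
  moreover have "enn2real x powr (1 / s) \<le> y powr (1 / s)"
    using assms by (intro powr_mono2 enn2real_leI) auto
  ultimately show ?thesis
    by (simp add: ennroot_def ennreal_leI)
qed

lemma le_ennreal_of_ennroot_le:
  assumes "0 < s" "0 \<le> y" "ennroot s x \<le> ennreal y"
  shows "x \<le> ennreal (y powr s)"
proof -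
  have "x \<noteq> top"
    using assms(3) by (auto simp: ennroot_def top_unique)
  then have x: "x = ennreal (enn2real x)"
    by (simp add: less_top)
  have "enn2real x powr (1 / s) \<le> y"
    using assms(2,3) \<open>x \<noteq> top\<close> by (simp add: ennroot_def)
  then have "(enn2real x powr (1 / s)) powr s \<le> y powr s"
    using assms(1) by (intro powr_mono2) auto
  then have "enn2real x \<le> y powr s"
    using assms(1) by (simp add: powr_powr)
  then show ?thesis
    by (subst x) (rule ennreal_leI)
qed

lemma Ls_averaging_osc_avg_bounded:
  fixes \<Omega> :: "'a::euclidean_space set"
  assumes avg: "Ls_averaging s \<Omega>" and s: "0 < s" and b: "0 \<le> b"
  obtains K where "0 \<le> K" "\<And>u. loc_integrable \<Omega> u \<Longrightarrow>
      (\<And>x \<rho>. 0 < \<rho> \<Longrightarrow> ball x \<rho> \<subseteq> \<Omega> \<Longrightarrow> osc_avg s (ball x \<rho>) u \<le> ennreal b) \<Longrightarrow>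
      osc_avg s \<Omega> u \<le> ennreal K"
proof -
  let ?balls = "{ball x \<rho> |x \<rho>. 0 < \<rho> \<and> ball x \<rho> \<subseteq> \<Omega>}"
  obtain C where C: "\<And>u. loc_integrable \<Omega> u \<Longrightarrow> ennroot s (osc_avg s \<Omega> u) \<le>
      ennreal C * ennroot s (SUP B\<in>?balls. osc_avg s B u)"
    using avg unfolding Ls_averaging_def by blast
  define K where "K = (max C 0 * b powr (1 / s)) powr s"
  have "osc_avg s \<Omega> u \<le> ennreal K"
    if u: "loc_integrable \<Omega> u"
      and balls: "\<And>x \<rho>. 0 < \<rho> \<Longrightarrow> ball x \<rho> \<subseteq> \<Omega> \<Longrightarrow> osc_avg s (ball x \<rho>) u \<le> ennreal b" for u
  proof -
    have "(SUP B\<in>?balls. osc_avg s B u) \<le> ennreal b"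
      using balls by (auto intro!: SUP_least)
    from ennroot_le_ennreal[OF s b this]
    have "ennroot s (SUP B\<in>?balls. osc_avg s B u) \<le> ennreal (b powr (1 / s))" .
    then have "ennreal C * ennroot s (SUP B\<in>?balls. osc_avg s B u)
        \<le> ennreal (max C 0) * ennreal (b powr (1 / s))"
      by (intro mult_mono ennreal_leI) auto
    with C[OF u] have "ennroot s (osc_avg s \<Omega> u) \<le> ennreal (max C 0) * ennreal (b powr (1 / s))"
      by (rule order_trans)
    also have "\<dots> = ennreal (max C 0 * b powr (1 / s))"
      by (simp add: ennreal_mult)
    finally show ?thesis
      unfolding K_def using s by (intro le_ennreal_of_ennroot_le) auto
  qed
  moreover have "0 \<le> K"
    by (simp add: K_def)
  ultimately show ?thesis
    using that by blast
qed

lemma osc_avg_le_of_range: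
  fixes u :: "'a::euclidean_space \<Rightarrow> real"
  assumes E: "E \<in> sets lebesgue" "0 < measure lebesgue E" and u: "set_integrable lebesgue E u"
    and range: "\<And>z. z \<in> E \<Longrightarrow> a \<le> u z \<and> u z \<le> a + d" and s: "0 \<le> s"
  shows "osc_avg s E u \<le> ennreal (d powr s)"
proof -
  have fin: "emeasure lebesgue E < \<infinity>"
    using E(2) by (cases "emeasure lebesgue E") (auto simp: measure_def)
  have const: "set_integrable lebesgue E (\<lambda>_. k)" for k :: real
    unfolding set_integrable_def using integrable_real_indicator[OF E(1) fin] by simp
  have int_const: "(LINT z:E|lebesgue. k) = measure lebesgue E * k" for k :: real
    using set_integral_const[OF E(1), of k] fin by simp
  define \<mu> where "\<mu> = mean_val E u"
  have "measure lebesgue E * a \<le> (LINT z:E|lebesgue. u z)" "(LINT z:E|lebesgue. u z) \<le> measure lebesgue E * (a + d)"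
    using set_integral_mono[OF const u, of a] set_integral_mono[OF u const, of "a + d"] range
    by (auto simp: int_const)
  then have "a \<le> \<mu>" "\<mu> \<le> a + d"
    using E(2) by (simp_all add: \<mu>_def mean_val_def field_simps)
  then have "\<bar>u z - \<mu>\<bar> powr s \<le> d powr s" if "z \<in> E" for z
    using range[OF that] s by (intro powr_mono2) auto
  then have "(\<integral>\<^sup>+z\<in>E. ennreal (\<bar>u z - \<mu>\<bar> powr s) \<partial>lebesgue) \<le> (\<integral>\<^sup>+z. ennreal (d powr s) * indicator E z \<partial>lebesgue)"
    by (intro nn_integral_mono) (simp add: indicator_def ennreal_leI)
  also have "\<dots> = ennreal (d powr s * measure lebesgue E)"
    using E(1) fin by (simp add: nn_integral_cmult_indicator emeasure_eq_ennreal_measure ennreal_mult)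
  finally have "osc_avg s E u \<le> ennreal (1 / measure lebesgue E) * ennreal (d powr s * measure lebesgue E)"
    unfolding osc_avg_def \<mu>_def by (rule mult_left_mono) simp
  also have "\<dots> = ennreal (d powr s)"
    using E(2) by (simp add: ennreal_mult[symmetric])
  finally show ?thesis .
qed

section \<open>Geometry of essential tubes\<close>

lemma essential_tubeD:
  fixes g :: "real \<times> (real^'m) \<Rightarrow> real \<times> (real^'m)"
  assumes "essential_tube \<Omega> g l r c \<Omega>T"
  shows "euclid_transf g" "0 < l" "0 < r" "0 < c" "\<Omega>T \<in> components (tube g l r \<inter> \<Omega>)"
    "\<Omega>T \<inter> tube_wall g l r = {}" "\<Omega>T \<subseteq> tube g l r" "\<Omega>T \<subseteq> \<Omega>"
    "\<And>t. t \<in> {0..l} \<Longrightarrow> c * measure lebesgue (cball (0::real^'m) r) \<le> slice_measure g r \<Omega>T t"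
  using assms in_components_subset[of \<Omega>T "tube g l r \<inter> \<Omega>"] unfolding essential_tube_def by auto

lemma essential_tube_coords:
  fixes g :: "real \<times> (real^'m) \<Rightarrow> real \<times> (real^'m)"
  assumes T: "essential_tube \<Omega> g l r c \<Omega>T" and w: "g w \<in> \<Omega>T"
  shows "fst w \<in> {0..l}" "norm (snd w) < r"
proof -
  note T' = essential_tubeD[OF T]
  have inj: "inj g"
    using euclid_transf_bij[OF T'(1)] by (rule bij_is_inj)
  have w_in: "w \<in> {0..l} \<times> cball 0 r"
    using T'(7) w inj unfolding tube_def by (metis inj_image_mem_iff subsetD)
  moreover have "norm (snd w) \<noteq> r"
  proof
    assume "norm (snd w) = r"
    then have "g w \<in> tube_wall g l r"
      using w_in by (auto simp: tube_wall_def mem_Times_iff)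
    then show False
      using T'(6) w by blast
  qed
  ultimately show "fst w \<in> {0..l}" "norm (snd w) < r"
    by (auto simp: mem_Times_iff)
qed

lemma essential_tube_ball_slab:
  fixes g :: "real \<times> (real^'m) \<Rightarrow> real \<times> (real^'m)"
  assumes T: "essential_tube \<Omega> g l r c \<Omega>T" and B: "g ` ball q \<rho> \<subseteq> \<Omega>"
    and x: "x \<in> ball q \<rho>" "g x \<in> \<Omega>T" and w: "w \<in> ball q \<rho>" "fst w \<in> {0..l}"
  shows "g w \<in> \<Omega>T" "norm (snd w) < r"
proof -
  note T' = essential_tubeD[OF T]
  \<comment> \<open>K is connected and meets \<Omega>T, so it lies in \<Omega>T and avoids the wall; on the convex set C
    the distance to the axis therefore cannot pass from below r to r.\<close>
  define K where "K = ball q \<rho> \<inter> ({0..l} \<times> cball 0 r)"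
  define C where "C = ball q \<rho> \<inter> ({0..l} \<times> UNIV)"
  have xK: "x \<in> K" and xC: "x \<in> C" and x_in: "norm (snd x) < r"
    using x essential_tube_coords[OF T x(2)] by (auto simp: K_def C_def mem_Times_iff)
  have "g ` K \<subseteq> \<Omega>T"
  proof (rule components_maximal[OF T'(5)])
    show "connected (g ` K)"
      unfolding K_def
      by (intro connected_continuous_image euclid_transf_continuous_on[OF T'(1)] convex_connected
          convex_Int convex_Times convex_ball convex_cball convex_real_interval)
    show "g ` K \<subseteq> tube g l r \<inter> \<Omega>"
      using B by (auto simp: K_def tube_def)
    show "\<Omega>T \<inter> g ` K \<noteq> {}"
      using xK x(2) by blast
  qed
  have off_wall: "norm (snd v) \<noteq> r" if "v \<in> K" for v
  proof
    assume "norm (snd v) = r"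
    then have "g v \<in> tube_wall g l r"
      using that by (auto simp: K_def tube_wall_def mem_Times_iff)
    then show False
      using T'(6) \<open>g ` K \<subseteq> \<Omega>T\<close> that by blast
  qed
  have interval: "is_interval ((\<lambda>v. norm (snd v)) ` C)"
    unfolding is_interval_connected_1 C_def
    by (intro connected_continuous_image continuous_intros convex_connected
        convex_Int convex_Times convex_ball convex_UNIV convex_real_interval)
  have wC: "w \<in> C"
    using w by (auto simp: C_def mem_Times_iff)
  have "norm (snd w) < r"
  proof (rule ccontr)
    assume "\<not> norm (snd w) < r"
    then have "r \<in> (\<lambda>v. norm (snd v)) ` C"
      using interval xC wC x_in unfolding is_interval_1 by (metis imageI less_imp_le not_less)
    then obtain v where "v \<in> C" "norm (snd v) = r"
      by auto
    then have "v \<in> K"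
      by (auto simp: C_def K_def mem_Times_iff)
    then show False
      using off_wall \<open>norm (snd v) = r\<close> by blast
  qed
  moreover have "w \<in> K"
    using wC calculation by (auto simp: C_def K_def mem_Times_iff)
  ultimately show "g w \<in> \<Omega>T" "norm (snd w) < r"
    using \<open>g ` K \<subseteq> \<Omega>T\<close> by auto
qed

lemma abs_fst_diff_less_ball: "w \<in> ball q \<rho> \<Longrightarrow> \<bar>fst w - fst q\<bar> < \<rho>"
  by (metis dist_commute dist_fst_le dist_real_def le_less_trans mem_ball)

lemma essential_tube_ball_radius_le:
  fixes g :: "real \<times> (real^'m) \<Rightarrow> real \<times> (real^'m)"
  assumes T: "essential_tube \<Omega> g l r c \<Omega>T" and B: "g ` ball q \<rho> \<subseteq> \<Omega>"
    and x: "x \<in> ball q \<rho>" "g x \<in> \<Omega>T" and mid: "2 * r < fst x" "fst x < l - 2 * r"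
  shows "\<rho> \<le> r"
proof -
  note T' = essential_tubeD[OF T]
  have r: "0 < r" and \<rho>: "0 < \<rho>"
    using T'(3) x(1) zero_le_dist[of q x] unfolding mem_ball by linarith+
  obtain v0 :: "real^'m" where "norm v0 = 1"
    by (metis vector_choose_size zero_le_one)
  define v where "v = (if 0 \<le> snd q \<bullet> v0 then v0 else - v0)"
  have v: "norm v = 1" "0 \<le> snd q \<bullet> v"
    using \<open>norm v0 = 1\<close> by (auto simp: v_def)
  have far: "r \<le> norm (snd q + r *\<^sub>R v)"
  proof -
    have "r \<le> (snd q + r *\<^sub>R v) \<bullet> v"
      using v by (simp add: inner_add_left dot_square_norm)
    also have "\<dots> \<le> norm (snd q + r *\<^sub>R v)"
      using norm_cauchy_schwarz[of "snd q + r *\<^sub>R v" v] v by simp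
    finally show ?thesis .
  qed
  \<comment> \<open>The point (t, snd q + r v) is at distance at least r from the axis, so it is not in the
    ball; this bounds \<rho> by the distance from q to that point.\<close>
  have slice: "\<rho>\<^sup>2 \<le> (t - fst q)\<^sup>2 + r\<^sup>2" if "t \<in> {0..l}" for t
  proof (rule ccontr)
    assume "\<not> ?thesis"
    then have "sqrt ((t - fst q)\<^sup>2 + r\<^sup>2) < \<rho>"
      using \<rho> by (intro real_less_lsqrt) auto
    moreover have "dist (t, snd q + r *\<^sub>R v) q = sqrt ((t - fst q)\<^sup>2 + r\<^sup>2)"
      using dist_Pair_Pair[of t "snd q + r *\<^sub>R v" "fst q" "snd q"] v r
      by (simp add: dist_real_def dist_norm)
    ultimately have "(t, snd q + r *\<^sub>R v) \<in> ball q \<rho>"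
      by (simp add: dist_commute)
    then have "norm (snd q + r *\<^sub>R v) < r"
      using essential_tube_ball_slab(2)[OF T B x] that by fastforce
    then show False
      using far by simp
  qed
  have outside: False if "0 \<le> d" "2 * r + d < \<rho>" "\<rho>\<^sup>2 \<le> d\<^sup>2 + r\<^sup>2" for d
  proof -
    have "(2 * r + d)\<^sup>2 < \<rho>\<^sup>2"
      using that r by (intro power_strict_mono) auto
    moreover have "d\<^sup>2 + r\<^sup>2 \<le> (2 * r + d)\<^sup>2"
      using that r by (simp add: power2_eq_square algebra_simps)
    ultimately show False
      using that(3) by (meson leD order_trans)
  qed
  have "\<bar>fst x - fst q\<bar> < \<rho>"
    using x(1) by (rule abs_fst_diff_less_ball)
  then consider "fst q \<in> {0..l}" | "fst q < 0" "2 * r + (0 - fst q) < \<rho>"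
    | "l < fst q" "2 * r + (fst q - l) < \<rho>"
    using mid by force
  then show ?thesis
  proof cases
    case 1
    then have "\<rho>\<^sup>2 \<le> r\<^sup>2"
      using slice by fastforce
    then show ?thesis
      by (rule power2_le_imp_le) (use r in linarith)
  next
    case 2
    then show ?thesis
      using outside[of "0 - fst q"] slice[of 0] T'(2) by simp
  next
    case 3
    then show ?thesis
      using outside[of "fst q - l"] slice[of l] T'(2) by (simp add: power2_commute)
  qed
qed

definition tent :: "real \<Rightarrow> real \<Rightarrow> real \<Rightarrow> real" where
  "tent l r t = min t (l - t) / r"

lemma tent_Lipschitz:
  assumes "0 < r"
  shows "\<bar>tent l r a - tent l r b\<bar> \<le> \<bar>a - b\<bar> / r"
proof -
  have "\<bar>min a (l - a) - min b (l - b)\<bar> \<le> \<bar>a - b\<bar>"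
    by (auto simp: min_def abs_if)
  then show ?thesis
    using assms by (simp add: tent_def diff_divide_distrib[symmetric] divide_right_mono)
qed

lemma tent_nonneg: "0 < r \<Longrightarrow> t \<in> {0..l} \<Longrightarrow> 0 \<le> tent l r t"
  by (simp add: tent_def)

lemma tent_le: "0 < r \<Longrightarrow> t \<in> {0..l} \<Longrightarrow> tent l r t \<le> l / r"
  by (auto simp: tent_def min_def divide_right_mono)

lemma continuous_on_tent: "continuous_on S (tent l r)"
  unfolding tent_def divide_inverse by (intro continuous_intros)

lemma essential_tube_ball_in_component:
  fixes g :: "real \<times> (real^'m) \<Rightarrow> real \<times> (real^'m)"
  assumes T: "essential_tube \<Omega> g l r c \<Omega>T" and B: "g ` ball q \<rho> \<subseteq> \<Omega>"
    and x: "x \<in> ball q \<rho>" "g x \<in> \<Omega>T" and high: "2 < tent l r (fst x)"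
  shows "g ` ball q \<rho> \<subseteq> \<Omega>T"
    and "w \<in> ball q \<rho> \<Longrightarrow> \<bar>tent l r (fst w) - tent l r (fst q)\<bar> \<le> 1"
proof -
  note T' = essential_tubeD[OF T]
  have mid: "2 * r < fst x" "fst x < l - 2 * r"
    using high T'(3) by (auto simp: tent_def min_def field_simps split: if_splits)
  have "\<rho> \<le> r"
    using essential_tube_ball_radius_le[OF T B x mid] .
  have near: "\<bar>fst w - fst q\<bar> < r" if "w \<in> ball q \<rho>" for w
    using abs_fst_diff_less_ball[OF that] \<open>\<rho> \<le> r\<close> by linarith
  have "g w \<in> \<Omega>T" if "w \<in> ball q \<rho>" for w
  proof (rule essential_tube_ball_slab(1)[OF T B x that])
    show "fst w \<in> {0..l}"
      using near[OF that] near[OF x(1)] mid by auto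
  qed
  then show "g ` ball q \<rho> \<subseteq> \<Omega>T"
    by blast
  show "\<bar>tent l r (fst w) - tent l r (fst q)\<bar> \<le> 1" if "w \<in> ball q \<rho>"
  proof -
    have "\<bar>fst w - fst q\<bar> / r \<le> 1"
      using near[OF that] T'(3) by (simp add: divide_le_eq)
    then show ?thesis
      using tent_Lipschitz[OF T'(3), of l "fst w" "fst q"] by linarith
  qed
qed

lemma essential_tube_component_borel:
  fixes g :: "real \<times> (real^'m) \<Rightarrow> real \<times> (real^'m)"
  assumes T: "essential_tube \<Omega> g l r c \<Omega>T" and \<Omega>: "open \<Omega>"
  shows "\<Omega>T \<in> sets borel"
proof -
  note T' = essential_tubeD[OF T]
  have "compact (tube g l r)"
    unfolding tube_def
    by (intro compact_continuous_image euclid_transf_continuous_on[OF T'(1)] compact_Times) auto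
  moreover obtain F where "closed F" "\<Omega>T = tube g l r \<inter> \<Omega> \<inter> F"
    using closedin_component[OF T'(5)] unfolding closedin_closed by blast
  ultimately show ?thesis
    using \<Omega> by (metis borel_closed borel_open compact_imp_closed sets.Int)
qed

lemma borel_measurable_fst_inv_euclid_transf:
  fixes g :: "'a::euclidean_space \<times> 'b::euclidean_space \<Rightarrow> 'a \<times> 'b"
  assumes "euclid_transf g"
  shows "(\<lambda>z. fst (inv g z)) \<in> borel_measurable borel"
  using euclid_transf_continuous_on[OF euclid_transf_inv[OF assms]]
  by (intro borel_measurable_continuous_onI continuous_on_compose2[OF continuous_on_fst]) auto

lemma essential_tube_slab_borel:
  fixes g :: "real \<times> (real^'m) \<Rightarrow> real \<times> (real^'m)"
  assumes T: "essential_tube \<Omega> g l r c \<Omega>T" and \<Omega>: "open \<Omega>"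
  shows "{z \<in> \<Omega>T. fst (inv g z) \<in> {a..b}} \<in> sets borel"
proof -
  have "(\<lambda>z. fst (inv g z)) -` {a..b} \<inter> space borel \<in> sets borel"
    using borel_measurable_fst_inv_euclid_transf[OF essential_tubeD(1)[OF T]] by (rule measurable_sets) simp
  then show ?thesis
    using essential_tube_component_borel[OF T \<Omega>] by (auto simp: Collect_conj_eq vimage_def)
qed

lemma emeasure_essential_tube_slab_ge:
  fixes g :: "real \<times> (real^'m) \<Rightarrow> real \<times> (real^'m)"
  assumes T: "essential_tube \<Omega> g l r c \<Omega>T" and \<Omega>: "open \<Omega>"
    and ab: "0 \<le> a" "a \<le> b" "b \<le> l"
  shows "ennreal ((b - a) * (c * measure lebesgue (cball (0::real^'m) r)))
           \<le> emeasure lebesgue {z \<in> \<Omega>T. fst (inv g z) \<in> {a..b}}"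
proof -
  note T' = essential_tubeD[OF T]
  define S where "S = {z \<in> \<Omega>T. fst (inv g z) \<in> {a..b}}"
  define A where "A = {w. g w \<in> \<Omega>T \<and> fst w \<in> {a..b}}"
  define \<mu> where "\<mu> = c * measure lebesgue (cball (0::real^'m) r)"
  have A_eq: "A = inv g ` S"
  proof
    show "A \<subseteq> inv g ` S"
    proof
      fix w
      assume "w \<in> A"
      then show "w \<in> inv g ` S"
        using T'(1) by (intro image_eqI[of _ _ "g w"]) (simp_all add: A_def S_def)
    qed
    show "inv g ` S \<subseteq> A"
      using T'(1) by (auto simp: A_def S_def)
  qed
  have "g -` \<Omega>T \<in> sets borel"
    using borel_measurable_continuous_onI[OF euclid_transf_continuous_on[OF T'(1)]]
      essential_tube_component_borel[OF T \<Omega>] by (metis measurable_sets space_borel Int_UNIV_right)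
  moreover have "{a..b} \<times> UNIV \<in> sets (borel :: (real \<times> (real^'m)) measure)"
    by (intro borel_closed closed_Times) auto
  moreover have "A = g -` \<Omega>T \<inter> ({a..b} \<times> UNIV)"
    by (auto simp: A_def)
  ultimately have A_borel: "A \<in> sets (borel :: (real \<times> (real^'m)) measure)"
    by simp
  have A_prod: "A \<in> sets (lborel \<Otimes>\<^sub>M (lborel :: (real^'m) measure))"
    using A_borel by (simp only: lborel_prod sets_lborel)
  \<comment> \<open>Fubini in tube coordinates: every slice of A is a slice of \<Omega>T.\<close>
  have slice: "ennreal \<mu> \<le> emeasure lborel (Pair t -` A)" if t: "t \<in> {a..b}" for t
  proof -
    have eq: "Pair t -` A = {y \<in> cball 0 r. g (t, y) \<in> \<Omega>T}"
      using t essential_tube_coords(2)[OF T, of "(t, _)"] by (auto simp: A_def less_imp_le)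
    have "Pair t -` A \<in> sets (lborel :: (real^'m) measure)"
      using A_prod by (rule sets_Pair1)
    moreover have "bounded (Pair t -` A)"
      unfolding eq by (rule bounded_subset[OF bounded_cball[of 0 r]]) auto
    ultimately have "emeasure lborel (Pair t -` A) = ennreal (measure lborel (Pair t -` A))"
      using emeasure_bounded_finite by (intro emeasure_eq_ennreal_measure) (simp add: less_top)
    also have "measure lborel (Pair t -` A) = slice_measure g r \<Omega>T t"
      unfolding slice_measure_def eq[symmetric] using \<open>Pair t -` A \<in> sets lborel\<close> by simp
    finally have "emeasure lborel (Pair t -` A) = ennreal (slice_measure g r \<Omega>T t)" .
    moreover have "\<mu> \<le> slice_measure g r \<Omega>T t"
      using T'(9) t ab by (simp add: \<mu>_def)
    ultimately show ?thesis
      by (simp add: ennreal_leI)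
  qed
  have "0 \<le> \<mu>"
    using T'(4) by (simp add: \<mu>_def)
  then have "ennreal ((b - a) * \<mu>) = ennreal \<mu> * emeasure lborel {a..b}"
    using ab by (simp add: ennreal_mult' mult.commute)
  also have "\<dots> = (\<integral>\<^sup>+t. ennreal \<mu> * indicator {a..b} t \<partial>lborel)"
    by (simp add: nn_integral_cmult_indicator)
  also have "\<dots> \<le> (\<integral>\<^sup>+t. emeasure lborel (Pair t -` A) \<partial>lborel)"
    using slice by (intro nn_integral_mono) (simp split: split_indicator)
  also have "\<dots> = emeasure (lborel \<Otimes>\<^sub>M lborel) A"
    using A_prod by (rule lborel.emeasure_pair_measure_alt[symmetric])
  also have "\<dots> = emeasure lebesgue A"
    using A_borel by (simp add: lborel_prod)
  also have "\<dots> \<le> emeasure lebesgue S"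
    unfolding A_eq using euclid_transf_inv[OF T'(1)] essential_tube_slab_borel[OF T \<Omega>]
    by (intro emeasure_euclid_transf_image_le) (auto simp: S_def)
  finally show ?thesis
    by (simp add: S_def \<mu>_def)
qed

lemma essential_tube_weight_nonneg:
  fixes g :: "real \<times> (real^'m) \<Rightarrow> real \<times> (real^'m)"
  assumes "essential_tube \<Omega> g l r c \<Omega>T"
  shows "0 \<le> c * r ^ k * (l / r) powr p"
  using essential_tubeD(3,4)[OF assms] by simp

lemma set_nn_integral_essential_tube_ge:
  fixes g :: "real \<times> (real^'m) \<Rightarrow> real \<times> (real^'m)" and v :: "real \<times> (real^'m) \<Rightarrow> real"
  assumes T: "essential_tube \<Omega> g l r c \<Omega>T" and \<Omega>: "open \<Omega>" and s: "0 \<le> s"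
    and v: "\<And>z. z \<in> \<Omega>T \<Longrightarrow> v z = tent l r (fst (inv g z))"
  shows "ennreal (unit_ball_vol CARD('m) / 8 powr (s + 1) * (c * r ^ (CARD('m) + 1) * (l / r) powr (s + 1)))
           \<le> (\<integral>\<^sup>+z\<in>\<Omega>T. ennreal (\<bar>v z - m\<bar> powr s) \<partial>lebesgue)"
proof -
  note T' = essential_tubeD[OF T]
  define \<delta> where "\<delta> = l / (8 * r)"
  define a where "a = (if 2 * \<delta> \<le> m then 0 else 3 * l / 8)"
  define S where "S = {z \<in> \<Omega>T. fst (inv g z) \<in> {a..a + l / 8}}"
  \<comment> \<open>If the mean m is at least 2\<delta>, then v \<le> \<delta> on the slab next to the end of the tube;
    otherwise v \<ge> 3\<delta> on the slab next to the middle.\<close>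
  have deviation: "\<delta> \<le> \<bar>v z - m\<bar>" if "z \<in> S" for z
  proof -
    define t where "t = fst (inv g z)"
    have t: "a \<le> t" "t \<le> a + l / 8" and vz: "v z = min t (l - t) / r"
      using that v by (auto simp: S_def t_def tent_def)
    show ?thesis
    proof (cases "2 * \<delta> \<le> m")
      case True
      then have "min t (l - t) \<le> l / 8"
        using t by (simp add: a_def)
      then have "v z \<le> \<delta>"
        using T'(3) by (simp add: vz \<delta>_def divide_right_mono field_simps)
      then have "\<delta> \<le> - (v z - m)"
        using True by linarith
      then show ?thesis
        using abs_ge_minus_self order.trans by blast
    next
      case False
      then have "3 * l / 8 \<le> min t (l - t)"
        using t by (simp add: a_def)
      then have "3 * \<delta> \<le> v z"
        using T'(3) by (simp add: vz \<delta>_def divide_right_mono field_simps)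
      then have "\<delta> \<le> v z - m"
        using False by linarith
      then show ?thesis
        using abs_ge_self order.trans by blast
    qed
  qed
  have S_sets: "S \<in> sets lebesgue"
    using essential_tube_slab_borel[OF T \<Omega>] by (simp add: S_def)
  have "0 \<le> a" "a \<le> a + l / 8" "a + l / 8 \<le> l"
    using T'(2) by (auto simp: a_def)
  from emeasure_essential_tube_slab_ge[OF T \<Omega> this]
  have slab: "ennreal (l / 8 * (c * measure lebesgue (cball (0::real^'m) r))) \<le> emeasure lebesgue S"
    unfolding S_def by simp
  have "\<delta> powr s = (l / r) powr s / 8 powr s"
    using T'(2,3) by (simp add: \<delta>_def powr_divide[symmetric] field_simps)
  moreover have "(l / r) powr (s + 1) = (l / r) powr s * (l / r)" "(8::real) powr (s + 1) = 8 powr s * 8"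
    using T'(2,3) by (simp_all add: powr_add)
  moreover have "measure lebesgue (cball (0::real^'m) r) = unit_ball_vol CARD('m) * r ^ CARD('m)"
    using T'(3) content_cball[of r "0::real^'m"] by simp
  ultimately have weight_eq: "unit_ball_vol CARD('m) / 8 powr (s + 1) * (c * r ^ (CARD('m) + 1) * (l / r) powr (s + 1))
      = \<delta> powr s * (l / 8 * (c * measure lebesgue (cball (0::real^'m) r)))"
    using T'(3) by (simp add: field_simps)
  then have "ennreal (unit_ball_vol CARD('m) / 8 powr (s + 1) * (c * r ^ (CARD('m) + 1) * (l / r) powr (s + 1)))
      = ennreal (\<delta> powr s) * ennreal (l / 8 * (c * measure lebesgue (cball (0::real^'m) r)))"
    unfolding weight_eq using T'(2,4) by (intro ennreal_mult) simp_all
  also have "\<dots> \<le> ennreal (\<delta> powr s) * emeasure lebesgue S"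
    using slab by (rule mult_left_mono) simp
  also have "\<dots> = (\<integral>\<^sup>+z. ennreal (\<delta> powr s) * indicator S z \<partial>lebesgue)"
    using S_sets by (rule nn_integral_cmult_indicator[symmetric])
  also have "\<dots> \<le> (\<integral>\<^sup>+z\<in>\<Omega>T. ennreal (\<bar>v z - m\<bar> powr s) \<partial>lebesgue)"
  proof (rule nn_integral_mono)
    fix z
    have "\<delta> powr s \<le> \<bar>v z - m\<bar> powr s" if "z \<in> S"
      using deviation[OF that] T'(2,3) s by (intro powr_mono2) (auto simp: \<delta>_def)
    then show "ennreal (\<delta> powr s) * indicator S z \<le> ennreal (\<bar>v z - m\<bar> powr s) * indicator \<Omega>T z"
      by (auto simp: S_def indicator_def ennreal_leI)
  qed
  finally show ?thesis .
qed

section \<open>The test function\<close>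

locale essential_tube_family =
  fixes \<Omega> :: "(real \<times> (real^'m)) set" and F :: "'i set"
    and g :: "'i \<Rightarrow> real \<times> (real^'m) \<Rightarrow> real \<times> (real^'m)"
    and l r c :: "'i \<Rightarrow> real" and \<Omega>T :: "'i \<Rightarrow> (real \<times> (real^'m)) set"
  assumes open_domain: "open \<Omega>" and finite_index: "finite F"
    and essential: "\<And>i. i \<in> F \<Longrightarrow> essential_tube \<Omega> (g i) (l i) (r i) (c i) (\<Omega>T i)"
    and disjoint: "disjoint_family_on \<Omega>T F"
begin

definition test_fun :: "real \<times> (real^'m) \<Rightarrow> real" where
  "test_fun z = (\<Sum>i\<in>F. indicator (\<Omega>T i) z * tent (l i) (r i) (fst (inv (g i) z)))"

lemma test_fun_component:
  assumes "i \<in> F" "z \<in> \<Omega>T i"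
  shows "test_fun z = tent (l i) (r i) (fst (inv (g i) z))"
proof -
  have "test_fun z = (\<Sum>j\<in>F. if j = i then tent (l i) (r i) (fst (inv (g i) z)) else 0)"
    unfolding test_fun_def using assms disjoint
    by (intro sum.cong) (auto simp: disjoint_family_on_def indicator_def)
  then show ?thesis
    using assms(1) finite_index by simp
qed

lemma test_fun_outside: "(\<And>i. i \<in> F \<Longrightarrow> z \<notin> \<Omega>T i) \<Longrightarrow> test_fun z = 0"
  by (simp add: test_fun_def)

lemma test_fun_nonneg_le: "0 \<le> test_fun z" "test_fun z \<le> (\<Sum>i\<in>F. l i / r i)"
proof -
  have "0 \<le> indicator (\<Omega>T i) z * tent (l i) (r i) (fst (inv (g i) z)) \<and>
      indicator (\<Omega>T i) z * tent (l i) (r i) (fst (inv (g i) z)) \<le> l i / r i" if "i \<in> F" for i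
  proof (cases "z \<in> \<Omega>T i")
    case True
    have "fst (inv (g i) z) \<in> {0..l i}"
      using essential_tube_coords(1)[OF essential[OF that], of "inv (g i) z"] True
        essential_tubeD(1)[OF essential[OF that]] by simp
    then show ?thesis
      using True tent_nonneg tent_le essential_tubeD(3)[OF essential[OF that]] by simp
  next
    case False
    then show ?thesis
      using essential_tubeD(2,3)[OF essential[OF that]] by simp
  qed
  then show "0 \<le> test_fun z" "test_fun z \<le> (\<Sum>i\<in>F. l i / r i)"
    unfolding test_fun_def by (auto intro: sum_nonneg sum_mono)
qed

lemma borel_measurable_test_fun: "test_fun \<in> borel_measurable borel"
proof -
  have "(\<lambda>z. indicator (\<Omega>T i) z * tent (l i) (r i) (fst (inv (g i) z))) \<in> borel_measurable borel"
    if "i \<in> F" for i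
  proof (intro borel_measurable_times borel_measurable_indicator)
    show "\<Omega>T i \<in> sets borel"
      using essential[OF that] open_domain by (rule essential_tube_component_borel)
    show "(\<lambda>z. tent (l i) (r i) (fst (inv (g i) z))) \<in> borel_measurable borel"
      using borel_measurable_fst_inv_euclid_transf[OF essential_tubeD(1)[OF essential[OF that]]]
        borel_measurable_continuous_onI[OF continuous_on_tent] by (rule measurable_compose)
  qed
  then show ?thesis
    unfolding test_fun_def by (rule borel_measurable_sum)
qed

lemma set_integrable_test_fun:
  assumes "A \<in> sets lebesgue" "emeasure lebesgue A < \<infinity>"
  shows "set_integrable lebesgue A test_fun"
proof (rule set_integrable_bound)
  show "set_integrable lebesgue A (\<lambda>_. \<Sum>i\<in>F. l i / r i)"
    unfolding set_integrable_def using integrable_real_indicator[OF assms] by simp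
  show "set_borel_measurable lebesgue A test_fun"
    unfolding set_borel_measurable_def using assms(1) borel_measurable_test_fun
    by (intro borel_measurable_scaleR borel_measurable_indicator) (auto simp: measurable_completion)
  show "AE x in lebesgue. x \<in> A \<longrightarrow> norm (test_fun x) \<le> norm (\<Sum>i\<in>F. l i / r i)"
    using test_fun_nonneg_le by (intro AE_I2) (metis abs_of_nonneg order_trans real_norm_def)
qed

lemma loc_integrable_test_fun: "loc_integrable \<Omega> test_fun"
  unfolding loc_integrable_def
proof (intro allI impI)
  fix K :: "(real \<times> (real^'m)) set"
  assume "compact K \<and> K \<subseteq> \<Omega>"
  then have "K \<in> sets borel" "emeasure lborel K < \<infinity>"
    using borel_compact emeasure_compact_finite by auto
  then show "set_integrable lebesgue K test_fun"
    by (intro set_integrable_test_fun) simp_all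
qed

lemma test_fun_ball_range:
  assumes B: "ball p \<rho> \<subseteq> \<Omega>"
  obtains a where "\<And>z. z \<in> ball p \<rho> \<Longrightarrow> a \<le> test_fun z \<and> test_fun z \<le> a + 2"
proof (cases "\<forall>z\<in>ball p \<rho>. test_fun z \<le> 2")
  case True
  then show ?thesis
    using that[of 0] test_fun_nonneg_le(1) by auto
next
  case False
  then obtain x where x: "x \<in> ball p \<rho>" "2 < test_fun x"
    by (auto simp: not_le)
  then obtain i where i: "i \<in> F" "x \<in> \<Omega>T i"
    using test_fun_outside by fastforce
  note T = essential[OF i(1)]
  have gi: "euclid_transf (g i)"
    using essential_tubeD(1)[OF T] .
  define q where "q = inv (g i) p"
  have ball: "g i ` ball q \<rho> = ball p \<rho>"
    using gi by (simp add: q_def euclid_transf_image_ball)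
  have "inv (g i) x \<in> ball q \<rho>" "g i (inv (g i) x) \<in> \<Omega>T i"
    using x(1) i(2) gi euclid_transf_dist[OF euclid_transf_inv[OF gi], of p x] by (auto simp: q_def)
  moreover have "2 < tent (l i) (r i) (fst (inv (g i) x))"
    using x(2) test_fun_component[OF i] by simp
  moreover have "g i ` ball q \<rho> \<subseteq> \<Omega>"
    using B ball by simp
  ultimately have inside: "g i ` ball q \<rho> \<subseteq> \<Omega>T i"
    and flat: "\<And>w. w \<in> ball q \<rho> \<Longrightarrow> \<bar>tent (l i) (r i) (fst w) - tent (l i) (r i) (fst q)\<bar> \<le> 1"
    using essential_tube_ball_in_component[OF T] by blast+
  show ?thesis
  proof (rule that[of "tent (l i) (r i) (fst q) - 1"])
    fix z
    assume "z \<in> ball p \<rho>"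
    then obtain w where w: "w \<in> ball q \<rho>" "z = g i w"
      unfolding ball[symmetric] by blast
    have "g i w \<in> \<Omega>T i"
      using inside w(1) by blast
    then have "test_fun z = tent (l i) (r i) (fst w)"
      using test_fun_component[OF i(1)] gi by (simp add: w(2))
    then show "tent (l i) (r i) (fst q) - 1 \<le> test_fun z \<and> test_fun z \<le> tent (l i) (r i) (fst q) - 1 + 2"
      using flat[OF w(1)] by (simp add: abs_le_iff)
  qed
qed

lemma osc_avg_ball_test_fun_le:
  assumes "0 \<le> s" "0 < \<rho>" "ball p \<rho> \<subseteq> \<Omega>"
  shows "osc_avg s (ball p \<rho>) test_fun \<le> ennreal (2 powr s)"
proof -
  obtain a where "\<And>z. z \<in> ball p \<rho> \<Longrightarrow> a \<le> test_fun z \<and> test_fun z \<le> a + 2"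
    using test_fun_ball_range[OF assms(3)] by blast
  moreover have "emeasure lebesgue (ball p \<rho>) < \<infinity>"
    using emeasure_bounded_finite[of "ball p \<rho>"] by simp
  ultimately show ?thesis
    using assms(1,2) by (intro osc_avg_le_of_range set_integrable_test_fun) auto
qed

lemma osc_avg_test_fun_ge:
  assumes s: "0 \<le> s"
  shows "ennreal (unit_ball_vol CARD('m) / 8 powr (s + 1) *
             (\<Sum>i\<in>F. c i * r i ^ (CARD('m) + 1) * (l i / r i) powr (s + 1)) / measure lebesgue \<Omega>)
           \<le> osc_avg s \<Omega> test_fun"
proof -
  define w where "w i = unit_ball_vol CARD('m) / 8 powr (s + 1) *
    (c i * r i ^ (CARD('m) + 1) * (l i / r i) powr (s + 1))" for i
  define m where "m = mean_val \<Omega> test_fun"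
  have w_nonneg: "0 \<le> w i" if "i \<in> F" for i
    unfolding w_def by (rule mult_nonneg_nonneg[OF _ essential_tube_weight_nonneg[OF essential[OF that]]]) simp
  have comp_borel: "\<Omega>T i \<in> sets borel" if "i \<in> F" for i
    using essential[OF that] open_domain by (rule essential_tube_component_borel)
  have "test_fun \<in> borel_measurable lebesgue"
    using borel_measurable_test_fun by (simp add: measurable_completion)
  then have meas: "(\<lambda>z. ennreal (\<bar>test_fun z - m\<bar> powr s)) \<in> borel_measurable lebesgue"
    by measurable
  have "ennreal (sum w F) = (\<Sum>i\<in>F. ennreal (w i))"
    using w_nonneg by (rule sum_ennreal[symmetric])
  also have "\<dots> \<le> (\<Sum>i\<in>F. \<integral>\<^sup>+z\<in>\<Omega>T i. ennreal (\<bar>test_fun z - m\<bar> powr s) \<partial>lebesgue)"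
    unfolding w_def using essential open_domain s test_fun_component
    by (intro sum_mono set_nn_integral_essential_tube_ge) auto
  also have "\<dots> \<le> (\<integral>\<^sup>+z\<in>\<Omega>. ennreal (\<bar>test_fun z - m\<bar> powr s) \<partial>lebesgue)"
    using finite_index disjoint comp_borel essential_tubeD(8)[OF essential] meas
    by (intro sum_set_nn_integral_le) auto
  finally have "ennreal (1 / measure lebesgue \<Omega>) * ennreal (sum w F) \<le> osc_avg s \<Omega> test_fun"
    unfolding osc_avg_def m_def by (rule mult_left_mono) simp
  moreover have "ennreal (sum w F / measure lebesgue \<Omega>) = ennreal (1 / measure lebesgue \<Omega>) * ennreal (sum w F)"
    by (simp add: ennreal_mult'[symmetric])
  moreover have "sum w F = unit_ball_vol CARD('m) / 8 powr (s + 1) *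
      (\<Sum>i\<in>F. c i * r i ^ (CARD('m) + 1) * (l i / r i) powr (s + 1))"
    unfolding w_def by (rule sum_distrib_left[symmetric])
  ultimately show ?thesis
    by simp
qed

end

theorem mainTheorem2:
  fixes \<Omega> :: "(real \<times> (real^'m)) set" and s :: real and I :: "'i set"
    and g :: "'i \<Rightarrow> real \<times> (real^'m) \<Rightarrow> real \<times> (real^'m)"
    and l r c :: "'i \<Rightarrow> real" and \<Omega>T :: "'i \<Rightarrow> (real \<times> (real^'m)) set"
  assumes "open \<Omega>" and "connected \<Omega>" and "\<Omega> \<noteq> {}" and "bounded \<Omega>"
    and "1 \<le> s"
    and "\<forall>i\<in>I. essential_tube \<Omega> (g i) (l i) (r i) (c i) (\<Omega>T i)"
    and "\<forall>i\<in>I. \<forall>j\<in>I. i \<noteq> j \<longrightarrow> \<Omega>T i \<inter> \<Omega>T j = {}"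
    and "(\<Sum>\<^sub>\<infinity>i\<in>I. ennreal (c i * r i ^ (CARD('m) + 1) * (l i / r i) powr (s + 1))) = \<infinity>"
  shows "\<not> Ls_averaging s \<Omega>"
proof
  assume "Ls_averaging s \<Omega>"
  have s: "0 < s"
    using assms(5) by simp
  obtain K where "0 \<le> K" and K: "\<And>u. loc_integrable \<Omega> u \<Longrightarrow>
      (\<And>x \<rho>. 0 < \<rho> \<Longrightarrow> ball x \<rho> \<subseteq> \<Omega> \<Longrightarrow> osc_avg s (ball x \<rho>) u \<le> ennreal (2 powr s)) \<Longrightarrow>
      osc_avg s \<Omega> u \<le> ennreal K"
    using Ls_averaging_osc_avg_bounded[OF \<open>Ls_averaging s \<Omega>\<close> s powr_ge_zero] by blast
  define \<kappa> where "\<kappa> = unit_ball_vol CARD('m) / 8 powr (s + 1)"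
  define E where "E i = c i * r i ^ (CARD('m) + 1) * (l i / r i) powr (s + 1)" for i
  have "\<Omega> \<in> lmeasurable"
    using assms(1,4) by (simp add: bounded_set_imp_lmeasurable)
  with assms(1,3) have \<Omega>: "0 < measure lebesgue \<Omega>"
    by (rule measure_lebesgue_pos_open)
  have "0 \<le> E i" if "i \<in> I" for i
    unfolding E_def by (rule essential_tube_weight_nonneg) (use assms(6) that in blast)
  then obtain F where F: "finite F" "F \<subseteq> I" and big: "K * measure lebesgue \<Omega> / \<kappa> < sum E F"
    using infsum_ennreal_eq_top_imp_sum_gt[of E I] assms(8) unfolding E_def by blast
  interpret essential_tube_family \<Omega> F g l r c \<Omega>T
    using assms(1,6,7) F by unfold_locales (auto simp: disjoint_family_on_def)
  have "ennreal (\<kappa> * sum E F / measure lebesgue \<Omega>) \<le> osc_avg s \<Omega> test_fun"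
    using osc_avg_test_fun_ge s by (simp add: \<kappa>_def E_def)
  also have "\<dots> \<le> ennreal K"
    using s by (intro K loc_integrable_test_fun osc_avg_ball_test_fun_le) auto
  finally have "\<kappa> * sum E F / measure lebesgue \<Omega> \<le> K"
    using \<open>0 \<le> K\<close> by simp
  moreover have "0 < \<kappa>"
    by (simp add: \<kappa>_def)
  ultimately show False
    using big \<Omega> by (simp add: field_simps)
qed

end
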